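(* Let $R$ be a ring and let $\mathfrak{p}$ be a proper left ideal of $R$. The following statements are equivalent: (1) $\mathfrak{p}$ is weakly prime. (2) For left ideals $A,B$ of $R$ both containing $\mathfrak{p}$, $AB\subseteq\mathfrak{p}$ implies $A=\mathfrak{p}$ or $B=\mathfrak{p}$. (3) For left ideals $A,B$ of $R$, $(A+\mathfrak{p})(B+\mathfrak{p})\subseteq\mathfrak{p}$ implies $A\subseteq\mathfrak{p}$ or $B\subseteq\mathfrak{p}$. (4) For left ideals $A,B$ of $R$, $AB\subseteq\mathfrak{p}$ and $\mathfrak{p}\subseteq A$ imply $\mathfrak{p}=A$ or $B\subseteq\mathfrak{p}$. (5) For left ideals $A,B$ of $R$, $(A+\mathfrak{p})B\subseteq\mathfrak{p}$ implies $A\subseteq\mathfrak{p}$ or $B\subseteq\mathfrak{p}$. (6) For $a,b\in R$, $(a+\mathfrak{p})R(b+\mathfrak{p})\subseteq\mathfrak{p}$ implies $a\in\mathfrak{p}$ or $b\in\mathfrak{p}$. (7) For every two-sided ideal $A$ of $R$ and every left ideal $B$ of $R$, $AB\subseteq\mathfrak{p}$ and $\mathfrak{p}B\subseteq\mathfrak{p}$ imply $A\subseteq\mathfrak{p}$ or $B\subseteq\mathfrak{p}$. (8) For $a,b\in R$, $aRb\subseteq\mathfrak{p}$ and $\mathfrak{p}Rb\subseteq\mathfrak{p}$ imply $a\in\mathfrak{p}$ or $b\in\mathfrak{p}$.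
   Context: Rings are associative and unital, not necessarily commutative. A left ideal $\mathfrak{p}$ of $R$ is weakly prime if $\mathfrak{p}\neq R$ and, for all left ideals $A,B$ of $R$, $AB\subseteq\mathfrak{p}$ and $\mathfrak{p}B\subseteq\mathfrak{p}$ imply $A\subseteq\mathfrak{p}$ or $B\subseteq\mathfrak{p}$. For subsets, $(a+\mathfrak{p})R(b+\mathfrak{p})$ denotes the set of all products $xry$ with $x\in a+\mathfrak{p}$, $r\in R$, $y\in b+\mathfrak{p}$. *)

theory Defs
  imports Main
begin

definition left_ideal :: "'a::ring_1 set \<Rightarrow> bool" where
  "left_ideal I \<longleftrightarrow> 0 \<in> I \<and> (\<forall>x\<in>I. \<forall>y\<in>I. x + y \<in> I) \<and> (\<forall>x\<in>I. - x \<in> I)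
     \<and> (\<forall>r x. x \<in> I \<longrightarrow> r * x \<in> I)"

definition two_sided_ideal :: "'a::ring_1 set \<Rightarrow> bool" where
  "two_sided_ideal I \<longleftrightarrow> left_ideal I \<and> (\<forall>r x. x \<in> I \<longrightarrow> x * r \<in> I)"

definition setmult :: "'a::ring_1 set \<Rightarrow> 'a set \<Rightarrow> 'a set" where
  "setmult A B = {sum_list (map (\<lambda>(a, b). a * b) xs) | xs. set xs \<subseteq> A \<times> B}"

definition setadd :: "'a::ring_1 set \<Rightarrow> 'a set \<Rightarrow> 'a set" where
  "setadd A B = {a + b | a b. a \<in> A \<and> b \<in> B}"

definition coset :: "'a::ring_1 \<Rightarrow> 'a set \<Rightarrow> 'a set" where
  "coset a P = {a + x | x. x \<in> P}"

text \<open>X R Y = set of all products x*r*y with x in X, r in R, y in Y.\<close>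
definition sandwich :: "'a::ring_1 set \<Rightarrow> 'a set \<Rightarrow> 'a set" where
  "sandwich X Y = {x * r * y | x r y. x \<in> X \<and> y \<in> Y}"

definition weakly_prime :: "'a::ring_1 set \<Rightarrow> bool" where
  "weakly_prime P \<longleftrightarrow> left_ideal P \<and> P \<noteq> UNIV \<and>
     (\<forall>A B. left_ideal A \<longrightarrow> left_ideal B \<longrightarrow> setmult A B \<subseteq> P \<longrightarrow> setmult P B \<subseteq> P
        \<longrightarrow> A \<subseteq> P \<or> B \<subseteq> P)"

end

theory Submission
  imports Defs
begin

text \<open>Everything reduces to the element-wise criterion (8). If \<open>aRb\<close> and \<open>PRb\<close> lie in \<open>P\<close>,
  then the two-sided ideal \<open>{x. xRb \<subseteq> P}\<close>, which contains \<open>a\<close> and \<open>P\<close>, and the left ideal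
  \<open>Rb + P\<close>, which contains \<open>b\<close>, have their product inside \<open>P\<close>; conversely, elements
  \<open>a \<in> A - P\<close> and \<open>b \<in> B - P\<close> violate (8), since \<open>aRb \<subseteq> AB\<close> and \<open>PRb \<subseteq> PB\<close>.
  The remaining conditions are rewritings of weak primeness by means of
  \<open>(A + P)(B + P) \<subseteq> P \<longleftrightarrow> AB \<subseteq> P \<and> PB \<subseteq> P\<close> and
  \<open>(a + P)R(b + P) \<subseteq> P \<longleftrightarrow> aRb \<subseteq> P \<and> PRb \<subseteq> P\<close>.\<close>

lemma
  assumes "left_ideal I"
  shows left_ideal_zero: "0 \<in> I"
    and left_ideal_add: "x \<in> I \<Longrightarrow> y \<in> I \<Longrightarrow> x + y \<in> I"
    and left_ideal_uminus: "x \<in> I \<Longrightarrow> - x \<in> I"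
    and left_ideal_mult_left: "x \<in> I \<Longrightarrow> r * x \<in> I"
  using assms by (auto simp: left_ideal_def)

lemma left_ideal_diff: "left_ideal I \<Longrightarrow> x \<in> I \<Longrightarrow> y \<in> I \<Longrightarrow> x - y \<in> I"
  by (metis left_ideal_add left_ideal_uminus diff_conv_add_uminus)

lemma left_idealI:
  assumes "0 \<in> I" "\<And>x y. x \<in> I \<Longrightarrow> y \<in> I \<Longrightarrow> x + y \<in> I" "\<And>x. x \<in> I \<Longrightarrow> - x \<in> I"
    "\<And>r x. x \<in> I \<Longrightarrow> r * x \<in> I"
  shows "left_ideal I"
  using assms by (simp add: left_ideal_def)

lemma left_ideal_setadd:
  assumes "left_ideal A" "left_ideal B"
  shows "left_ideal (setadd A B)"
proof (rule left_idealI)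
  show "0 \<in> setadd A B"
    unfolding setadd_def using assms by (force intro: left_ideal_zero)
next
  fix x y assume "x \<in> setadd A B" "y \<in> setadd A B"
  then obtain a b a' b' where "x = a + b" "y = a' + b'" "a \<in> A" "a' \<in> A" "b \<in> B" "b' \<in> B"
    unfolding setadd_def by blast
  moreover have "x + y = (a + a') + (b + b')" using calculation by (simp add: algebra_simps)
  ultimately show "x + y \<in> setadd A B"
    unfolding setadd_def using assms by (blast intro: left_ideal_add)
next
  fix x assume "x \<in> setadd A B"
  then obtain a b where "x = a + b" "a \<in> A" "b \<in> B" unfolding setadd_def by blast
  moreover have "- x = - a + - b" using calculation by simp
  ultimately show "- x \<in> setadd A B"
    unfolding setadd_def using assms by (blast intro: left_ideal_uminus)
next
  fix r x assume "x \<in> setadd A B"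
  then obtain a b where "x = a + b" "a \<in> A" "b \<in> B" unfolding setadd_def by blast
  moreover have "r * x = r * a + r * b" using calculation by (simp add: distrib_left)
  ultimately show "r * x \<in> setadd A B"
    unfolding setadd_def using assms by (blast intro: left_ideal_mult_left)
qed

lemma subset_setadd_left: "0 \<in> B \<Longrightarrow> A \<subseteq> setadd A B"
  unfolding setadd_def by force

lemma subset_setadd_right: "0 \<in> A \<Longrightarrow> B \<subseteq> setadd A B"
  unfolding setadd_def by force

lemma setmult_mono: "A \<subseteq> A' \<Longrightarrow> B \<subseteq> B' \<Longrightarrow> setmult A B \<subseteq> setmult A' B'"
  unfolding setmult_def by blast

lemma setmult_subset_iff:
  assumes "left_ideal P"
  shows "setmult A B \<subseteq> P \<longleftrightarrow> (\<forall>a\<in>A. \<forall>b\<in>B. a * b \<in> P)"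
proof
  assume "setmult A B \<subseteq> P"
  moreover have "a * b \<in> setmult A B" if "a \<in> A" "b \<in> B" for a b
    using that unfolding setmult_def by (intro CollectI exI[of _ "[(a, b)]"]) simp
  ultimately show "\<forall>a\<in>A. \<forall>b\<in>B. a * b \<in> P" by blast
next
  assume products: "\<forall>a\<in>A. \<forall>b\<in>B. a * b \<in> P"
  have "sum_list (map (\<lambda>(a, b). a * b) xs) \<in> P" if "set xs \<subseteq> A \<times> B" for xs
    using that by (induction xs) (auto simp: assms products left_ideal_zero left_ideal_add)
  then show "setmult A B \<subseteq> P" unfolding setmult_def by blast
qed

lemma setmult_setadd_left_subset_iff:
  assumes "left_ideal P" "0 \<in> A"
  shows "setmult (setadd A P) B \<subseteq> P \<longleftrightarrow> setmult A B \<subseteq> P \<and> setmult P B \<subseteq> P"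
proof
  assume "setmult (setadd A P) B \<subseteq> P"
  then show "setmult A B \<subseteq> P \<and> setmult P B \<subseteq> P"
    using setmult_mono[OF subset_setadd_left[OF left_ideal_zero[OF assms(1)]], of B B]
      setmult_mono[OF subset_setadd_right[OF assms(2)], of B B P] by blast
next
  assume "setmult A B \<subseteq> P \<and> setmult P B \<subseteq> P"
  then have products: "\<forall>a\<in>A. \<forall>b\<in>B. a * b \<in> P" "\<forall>p\<in>P. \<forall>b\<in>B. p * b \<in> P"
    by (simp_all add: setmult_subset_iff assms(1))
  have "(a + p) * b \<in> P" if "a \<in> A" "p \<in> P" "b \<in> B" for a p b
    using that products assms(1) by (simp add: distrib_right left_ideal_add)
  then show "setmult (setadd A P) B \<subseteq> P"
    unfolding setmult_subset_iff[OF assms(1)] setadd_def by blast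
qed

lemma setmult_setadd_right_subset_iff:
  assumes "left_ideal P" "0 \<in> B"
  shows "setmult X (setadd B P) \<subseteq> P \<longleftrightarrow> setmult X B \<subseteq> P"
proof
  assume "setmult X (setadd B P) \<subseteq> P"
  then show "setmult X B \<subseteq> P"
    using setmult_mono[OF order_refl subset_setadd_left[OF left_ideal_zero[OF assms(1)]], of X B]
    by blast
next
  assume "setmult X B \<subseteq> P"
  then have "x * (b + p) \<in> P" if "x \<in> X" "b \<in> B" "p \<in> P" for x b p
    using that assms(1)
    by (simp add: setmult_subset_iff distrib_left left_ideal_add left_ideal_mult_left)
  then show "setmult X (setadd B P) \<subseteq> P"
    unfolding setmult_subset_iff[OF assms(1)] setadd_def by blast
qed

lemma weakly_prime_iff:
  assumes "left_ideal P" "P \<noteq> UNIV"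
  shows "weakly_prime P \<longleftrightarrow> (\<forall>A B. left_ideal A \<longrightarrow> left_ideal B \<longrightarrow>
    setmult A B \<subseteq> P \<longrightarrow> setmult P B \<subseteq> P \<longrightarrow> A \<subseteq> P \<or> B \<subseteq> P)"
  using assms by (simp add: weakly_prime_def)

lemma weakly_prime_iff_setadd_left:
  assumes "left_ideal P" "P \<noteq> UNIV"
  shows "weakly_prime P \<longleftrightarrow> (\<forall>A B. left_ideal A \<longrightarrow> left_ideal B \<longrightarrow>
    setmult (setadd A P) B \<subseteq> P \<longrightarrow> A \<subseteq> P \<or> B \<subseteq> P)"
proof -
  have "setmult (setadd A P) B \<subseteq> P \<longleftrightarrow> setmult A B \<subseteq> P \<and> setmult P B \<subseteq> P"
    if "left_ideal A" for A B :: "'a set"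
    using setmult_setadd_left_subset_iff[OF assms(1) left_ideal_zero[OF that]] .
  then show ?thesis unfolding weakly_prime_iff[OF assms] by blast
qed

lemma weakly_prime_iff_setadd_setadd:
  assumes "left_ideal P" "P \<noteq> UNIV"
  shows "weakly_prime P \<longleftrightarrow> (\<forall>A B. left_ideal A \<longrightarrow> left_ideal B \<longrightarrow>
    setmult (setadd A P) (setadd B P) \<subseteq> P \<longrightarrow> A \<subseteq> P \<or> B \<subseteq> P)"
proof -
  have "setmult (setadd A P) (setadd B P) \<subseteq> P \<longleftrightarrow> setmult (setadd A P) B \<subseteq> P"
    if "left_ideal B" for A B :: "'a set"
    using setmult_setadd_right_subset_iff[OF assms(1) left_ideal_zero[OF that]] .
  then show ?thesis unfolding weakly_prime_iff_setadd_left[OF assms] by blast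
qed

lemma weakly_prime_iff_supersets:
  assumes "left_ideal P" "P \<noteq> UNIV"
  shows "weakly_prime P \<longleftrightarrow> (\<forall>A B. left_ideal A \<longrightarrow> left_ideal B \<longrightarrow> P \<subseteq> A \<longrightarrow> P \<subseteq> B \<longrightarrow>
    setmult A B \<subseteq> P \<longrightarrow> A = P \<or> B = P)"
proof
  assume "weakly_prime P"
  have "A = P \<or> B = P"
    if "left_ideal A" "left_ideal B" "P \<subseteq> A" "P \<subseteq> B" "setmult A B \<subseteq> P" for A B
  proof -
    have "setmult P B \<subseteq> P" using setmult_mono[OF \<open>P \<subseteq> A\<close> order_refl] that(5) by blast
    then have "A \<subseteq> P \<or> B \<subseteq> P"
      using \<open>weakly_prime P\<close> that unfolding weakly_prime_iff[OF assms] by blast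
    then show ?thesis using that(3,4) by blast
  qed
  then show "\<forall>A B. left_ideal A \<longrightarrow> left_ideal B \<longrightarrow> P \<subseteq> A \<longrightarrow> P \<subseteq> B \<longrightarrow>
    setmult A B \<subseteq> P \<longrightarrow> A = P \<or> B = P" by blast
next
  assume supersets: "\<forall>A B. left_ideal A \<longrightarrow> left_ideal B \<longrightarrow> P \<subseteq> A \<longrightarrow> P \<subseteq> B \<longrightarrow>
    setmult A B \<subseteq> P \<longrightarrow> A = P \<or> B = P"
  have "A \<subseteq> P \<or> B \<subseteq> P"
    if "left_ideal A" "left_ideal B" "setmult (setadd A P) (setadd B P) \<subseteq> P" for A B
  proof -
    have "setadd A P = P \<or> setadd B P = P"
      using supersets that assms(1)
      by (simp add: left_ideal_setadd subset_setadd_right left_ideal_zero)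
    then show ?thesis
      using subset_setadd_left[OF left_ideal_zero[OF assms(1)]] by blast
  qed
  then show "weakly_prime P" by (simp add: weakly_prime_iff_setadd_setadd assms)
qed

lemma weakly_prime_iff_superset_left:
  assumes "left_ideal P" "P \<noteq> UNIV"
  shows "weakly_prime P \<longleftrightarrow> (\<forall>A B. left_ideal A \<longrightarrow> left_ideal B \<longrightarrow>
    setmult A B \<subseteq> P \<longrightarrow> P \<subseteq> A \<longrightarrow> P = A \<or> B \<subseteq> P)"
proof
  assume "weakly_prime P"
  have "P = A \<or> B \<subseteq> P"
    if "left_ideal A" "left_ideal B" "setmult A B \<subseteq> P" "P \<subseteq> A" for A B
  proof -
    have "setmult P B \<subseteq> P" using setmult_mono[OF \<open>P \<subseteq> A\<close> order_refl] that(3) by blast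
    then have "A \<subseteq> P \<or> B \<subseteq> P"
      using \<open>weakly_prime P\<close> that unfolding weakly_prime_iff[OF assms] by blast
    then show ?thesis using that(4) by blast
  qed
  then show "\<forall>A B. left_ideal A \<longrightarrow> left_ideal B \<longrightarrow>
    setmult A B \<subseteq> P \<longrightarrow> P \<subseteq> A \<longrightarrow> P = A \<or> B \<subseteq> P" by blast
next
  assume superset_left: "\<forall>A B. left_ideal A \<longrightarrow> left_ideal B \<longrightarrow>
    setmult A B \<subseteq> P \<longrightarrow> P \<subseteq> A \<longrightarrow> P = A \<or> B \<subseteq> P"
  have "A \<subseteq> P \<or> B \<subseteq> P"
    if "left_ideal A" "left_ideal B" "setmult (setadd A P) B \<subseteq> P" for A B
  proof -
    have "P = setadd A P \<or> B \<subseteq> P"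
      using superset_left that assms(1)
      by (simp add: left_ideal_setadd subset_setadd_right left_ideal_zero)
    then show ?thesis
      using subset_setadd_left[OF left_ideal_zero[OF assms(1)]] by blast
  qed
  then show "weakly_prime P" by (simp add: weakly_prime_iff_setadd_left assms)
qed

lemma sandwich_singleton_subset_iff: "sandwich X {b} \<subseteq> P \<longleftrightarrow> (\<forall>x\<in>X. \<forall>r. x * r * b \<in> P)"
  unfolding sandwich_def by blast

definition sandwich_quotient :: "'a::ring_1 set \<Rightarrow> 'a \<Rightarrow> 'a set" where
  "sandwich_quotient P b = {x. sandwich {x} {b} \<subseteq> P}"

lemma mem_sandwich_quotient: "x \<in> sandwich_quotient P b \<longleftrightarrow> (\<forall>r. x * r * b \<in> P)"
  by (simp add: sandwich_quotient_def sandwich_singleton_subset_iff)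

lemma two_sided_ideal_sandwich_quotient:
  assumes "left_ideal P"
  shows "two_sided_ideal (sandwich_quotient P b)"
  unfolding two_sided_ideal_def
proof (intro conjI allI impI left_idealI)
  show "0 \<in> sandwich_quotient P b"
    by (simp add: mem_sandwich_quotient left_ideal_zero assms)
next
  fix x y assume "x \<in> sandwich_quotient P b" "y \<in> sandwich_quotient P b"
  then show "x + y \<in> sandwich_quotient P b"
    by (simp add: mem_sandwich_quotient distrib_right left_ideal_add assms)
next
  fix x assume "x \<in> sandwich_quotient P b"
  then show "- x \<in> sandwich_quotient P b"
    by (simp add: mem_sandwich_quotient left_ideal_uminus assms)
next
  fix r x assume "x \<in> sandwich_quotient P b"
  then show "r * x \<in> sandwich_quotient P b"
    by (simp add: mem_sandwich_quotient mult.assoc left_ideal_mult_left assms)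
next
  fix r x assume "x \<in> sandwich_quotient P b"
  then have "x * (r * s) * b \<in> P" for s by (simp add: mem_sandwich_quotient)
  then show "x * r \<in> sandwich_quotient P b"
    by (simp add: mem_sandwich_quotient mult.assoc)
qed

lemma left_ideal_range_mult_right: "left_ideal (range (\<lambda>s. s * b))"
proof (rule left_idealI)
  show "0 \<in> range (\<lambda>s. s * b)" by (rule range_eqI[of _ _ 0]) simp
next
  fix x y assume "x \<in> range (\<lambda>s. s * b)" "y \<in> range (\<lambda>s. s * b)"
  then obtain s t where "x = s * b" "y = t * b" by blast
  then show "x + y \<in> range (\<lambda>s. s * b)" by (simp add: range_eqI[of _ _ "s + t"] distrib_right)
next
  fix x assume "x \<in> range (\<lambda>s. s * b)"
  then obtain s where "x = s * b" by blast
  then show "- x \<in> range (\<lambda>s. s * b)" by (simp add: range_eqI[of _ _ "- s"])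
next
  fix r x assume "x \<in> range (\<lambda>s. s * b)"
  then obtain s where "x = s * b" by blast
  then show "r * x \<in> range (\<lambda>s. s * b)" by (simp add: range_eqI[of _ _ "r * s"] mult.assoc)
qed

lemma setmult_sandwich_quotient_subset:
  assumes "left_ideal P"
  shows "setmult (sandwich_quotient P b) (setadd (range (\<lambda>s. s * b)) P) \<subseteq> P"
proof -
  have "x * (s * b + q) \<in> P" if "x \<in> sandwich_quotient P b" "q \<in> P" for x s q
  proof -
    have "x * (s * b + q) = x * s * b + x * q" by (simp add: algebra_simps)
    then show ?thesis
      using that by (simp add: mem_sandwich_quotient left_ideal_add left_ideal_mult_left assms)
  qed
  then show ?thesis unfolding setmult_subset_iff[OF assms] setadd_def by blast
qed

lemma sandwich_condition_if_two_sided_condition: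
  assumes "left_ideal P"
    and two_sided: "\<forall>A B. two_sided_ideal A \<longrightarrow> left_ideal B \<longrightarrow>
      setmult A B \<subseteq> P \<longrightarrow> setmult P B \<subseteq> P \<longrightarrow> A \<subseteq> P \<or> B \<subseteq> P"
    and "sandwich {a} {b} \<subseteq> P" "sandwich P {b} \<subseteq> P"
  shows "a \<in> P \<or> b \<in> P"
proof -
  let ?A = "sandwich_quotient P b" and ?B = "setadd (range (\<lambda>s. s * b)) P"
  have "a \<in> ?A" "P \<subseteq> ?A"
    using assms(3,4) by (auto simp: sandwich_quotient_def sandwich_singleton_subset_iff)
  have "b \<in> range (\<lambda>s. s * b)" by (rule range_eqI[of _ _ 1]) simp
  then have "b \<in> ?B"
    using subset_setadd_left[OF left_ideal_zero[OF assms(1)], of "range (\<lambda>s. s * b)"] by blast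
  have "setmult P ?B \<subseteq> P"
    using setmult_mono[OF \<open>P \<subseteq> ?A\<close> order_refl, of ?B] setmult_sandwich_quotient_subset[OF assms(1)]
    by (rule order_trans)
  then have "?A \<subseteq> P \<or> ?B \<subseteq> P"
    by (intro two_sided[rule_format] two_sided_ideal_sandwich_quotient
        left_ideal_setadd left_ideal_range_mult_right setmult_sandwich_quotient_subset assms(1))
  then show ?thesis using \<open>a \<in> ?A\<close> \<open>b \<in> ?B\<close> by blast
qed

lemma weakly_prime_if_sandwich_condition:
  assumes "left_ideal P" "P \<noteq> UNIV"
    and sandwich: "\<forall>a b. sandwich {a} {b} \<subseteq> P \<longrightarrow> sandwich P {b} \<subseteq> P \<longrightarrow> a \<in> P \<or> b \<in> P"
  shows "weakly_prime P"
  unfolding weakly_prime_iff[OF assms(1,2)]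
proof (intro allI impI)
  fix A B assume "left_ideal A" "left_ideal B" "setmult A B \<subseteq> P" "setmult P B \<subseteq> P"
  show "A \<subseteq> P \<or> B \<subseteq> P"
  proof (rule ccontr)
    assume "\<not> (A \<subseteq> P \<or> B \<subseteq> P)"
    then obtain a b where "a \<in> A" "a \<notin> P" "b \<in> B" "b \<notin> P" by blast
    have "r * b \<in> B" for r using \<open>left_ideal B\<close> \<open>b \<in> B\<close> by (rule left_ideal_mult_left)
    then have "sandwich {a} {b} \<subseteq> P" "sandwich P {b} \<subseteq> P"
      using \<open>a \<in> A\<close> \<open>setmult A B \<subseteq> P\<close> \<open>setmult P B \<subseteq> P\<close>
      by (auto simp: sandwich_singleton_subset_iff setmult_subset_iff assms(1) mult.assoc)
    then show False using sandwich \<open>a \<notin> P\<close> \<open>b \<notin> P\<close> by blast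
  qed
qed

lemma weakly_prime_iff_two_sided:
  assumes "left_ideal P" "P \<noteq> UNIV"
  shows "weakly_prime P \<longleftrightarrow> (\<forall>A B. two_sided_ideal A \<longrightarrow> left_ideal B \<longrightarrow>
    setmult A B \<subseteq> P \<longrightarrow> setmult P B \<subseteq> P \<longrightarrow> A \<subseteq> P \<or> B \<subseteq> P)"
proof
  assume "weakly_prime P"
  then show "\<forall>A B. two_sided_ideal A \<longrightarrow> left_ideal B \<longrightarrow>
    setmult A B \<subseteq> P \<longrightarrow> setmult P B \<subseteq> P \<longrightarrow> A \<subseteq> P \<or> B \<subseteq> P"
    unfolding weakly_prime_iff[OF assms] two_sided_ideal_def by blast
next
  assume two_sided: "\<forall>A B. two_sided_ideal A \<longrightarrow> left_ideal B \<longrightarrow>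
    setmult A B \<subseteq> P \<longrightarrow> setmult P B \<subseteq> P \<longrightarrow> A \<subseteq> P \<or> B \<subseteq> P"
  have "a \<in> P \<or> b \<in> P" if "sandwich {a} {b} \<subseteq> P" "sandwich P {b} \<subseteq> P" for a b
    using sandwich_condition_if_two_sided_condition[OF assms(1) two_sided that] .
  then show "weakly_prime P" using weakly_prime_if_sandwich_condition[OF assms] by blast
qed

lemma weakly_prime_iff_sandwich:
  assumes "left_ideal P" "P \<noteq> UNIV"
  shows "weakly_prime P \<longleftrightarrow>
    (\<forall>a b. sandwich {a} {b} \<subseteq> P \<longrightarrow> sandwich P {b} \<subseteq> P \<longrightarrow> a \<in> P \<or> b \<in> P)"
proof
  assume "weakly_prime P"
  then have "\<forall>A B. two_sided_ideal A \<longrightarrow> left_ideal B \<longrightarrow>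
    setmult A B \<subseteq> P \<longrightarrow> setmult P B \<subseteq> P \<longrightarrow> A \<subseteq> P \<or> B \<subseteq> P"
    by (simp only: weakly_prime_iff_two_sided[OF assms])
  then show "\<forall>a b. sandwich {a} {b} \<subseteq> P \<longrightarrow> sandwich P {b} \<subseteq> P \<longrightarrow> a \<in> P \<or> b \<in> P"
    using sandwich_condition_if_two_sided_condition[OF assms(1)] by blast
next
  assume "\<forall>a b. sandwich {a} {b} \<subseteq> P \<longrightarrow> sandwich P {b} \<subseteq> P \<longrightarrow> a \<in> P \<or> b \<in> P"
  then show "weakly_prime P" by (rule weakly_prime_if_sandwich_condition[OF assms])
qed

lemma sandwich_coset_subset_iff:
  assumes "left_ideal P"
  shows "sandwich (coset a P) (coset b P) \<subseteq> P \<longleftrightarrow> sandwich {a} {b} \<subseteq> P \<and> sandwich P {b} \<subseteq> P"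
proof
  assume coset_products: "sandwich (coset a P) (coset b P) \<subseteq> P"
  have product_in: "(a + p) * r * (b + q) \<in> P" if "p \<in> P" "q \<in> P" for p q r
    using that coset_products unfolding sandwich_def coset_def by blast
  have "a * r * b \<in> P" for r
    using product_in[OF left_ideal_zero left_ideal_zero, OF assms assms] by simp
  moreover have "p * r * b \<in> P" if "p \<in> P" for p r
  proof -
    have "p * r * b = (a + p) * r * (b + 0) - a * r * b" by (simp add: algebra_simps)
    then show ?thesis
      using left_ideal_diff[OF assms product_in[OF that left_ideal_zero[OF assms]] \<open>a * r * b \<in> P\<close>]
      by simp
  qed
  ultimately show "sandwich {a} {b} \<subseteq> P \<and> sandwich P {b} \<subseteq> P"
    by (simp add: sandwich_singleton_subset_iff)
next
  assume "sandwich {a} {b} \<subseteq> P \<and> sandwich P {b} \<subseteq> P"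
  then have "a * r * b \<in> P" and "p \<in> P \<Longrightarrow> p * r * b \<in> P" for p r
    by (simp_all add: sandwich_singleton_subset_iff)
  then have "(a + p) * r * (b + q) \<in> P" if "p \<in> P" "q \<in> P" for p q r
  proof -
    have "(a + p) * r * (b + q) = (a * r * b + p * r * b) + (a * r) * q + (p * r) * q"
      by (simp add: algebra_simps)
    then show ?thesis
      using that \<open>\<And>r. a * r * b \<in> P\<close> \<open>\<And>p r. p \<in> P \<Longrightarrow> p * r * b \<in> P\<close>
      by (simp add: left_ideal_add left_ideal_mult_left assms)
  qed
  then show "sandwich (coset a P) (coset b P) \<subseteq> P"
    unfolding sandwich_def coset_def by blast
qed

lemma weakly_prime_iff_sandwich_coset:
  assumes "left_ideal P" "P \<noteq> UNIV"
  shows "weakly_prime P \<longleftrightarrow> (\<forall>a b. sandwich (coset a P) (coset b P) \<subseteq> P \<longrightarrow> a \<in> P \<or> b \<in> P)"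
  unfolding weakly_prime_iff_sandwich[OF assms] sandwich_coset_subset_iff[OF assms(1)] by blast

theorem proposition2p21:
  fixes P :: "'a::ring_1 set"
  assumes "left_ideal P" and "P \<noteq> UNIV"
  shows
   "(weakly_prime P \<longleftrightarrow>
      (\<forall>A B. left_ideal A \<longrightarrow> left_ideal B \<longrightarrow> P \<subseteq> A \<longrightarrow> P \<subseteq> B \<longrightarrow>
         setmult A B \<subseteq> P \<longrightarrow> A = P \<or> B = P))
  \<and> (weakly_prime P \<longleftrightarrow>
      (\<forall>A B. left_ideal A \<longrightarrow> left_ideal B \<longrightarrow>
         setmult (setadd A P) (setadd B P) \<subseteq> P \<longrightarrow> A \<subseteq> P \<or> B \<subseteq> P))
  \<and> (weakly_prime P \<longleftrightarrow>
      (\<forall>A B. left_ideal A \<longrightarrow> left_ideal B \<longrightarrow>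
         setmult A B \<subseteq> P \<longrightarrow> P \<subseteq> A \<longrightarrow> P = A \<or> B \<subseteq> P))
  \<and> (weakly_prime P \<longleftrightarrow>
      (\<forall>A B. left_ideal A \<longrightarrow> left_ideal B \<longrightarrow>
         setmult (setadd A P) B \<subseteq> P \<longrightarrow> A \<subseteq> P \<or> B \<subseteq> P))
  \<and> (weakly_prime P \<longleftrightarrow>
      (\<forall>a b. sandwich (coset a P) (coset b P) \<subseteq> P \<longrightarrow> a \<in> P \<or> b \<in> P))
  \<and> (weakly_prime P \<longleftrightarrow>
      (\<forall>A B. two_sided_ideal A \<longrightarrow> left_ideal B \<longrightarrow>
         setmult A B \<subseteq> P \<longrightarrow> setmult P B \<subseteq> P \<longrightarrow> A \<subseteq> P \<or> B \<subseteq> P))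
  \<and> (weakly_prime P \<longleftrightarrow>
      (\<forall>a b. sandwich {a} {b} \<subseteq> P \<longrightarrow> sandwich P {b} \<subseteq> P \<longrightarrow> a \<in> P \<or> b \<in> P))"
  using assms
  by (intro conjI weakly_prime_iff_supersets weakly_prime_iff_setadd_setadd
      weakly_prime_iff_superset_left weakly_prime_iff_setadd_left weakly_prime_iff_sandwich_coset
      weakly_prime_iff_two_sided weakly_prime_iff_sandwich)

end
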